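(* Let $\mathcal{A} \subseteq 2^{[8]}$ consist of the following 11 sets: $A_0=[8]$, $A_1=\{2,4,6,7,8\}$, $A_2=\{1,3,5,8\}$, $A_3=\{1,4,7,8\}$, $A_4=\{2,3,5,6\}$, $A_5=\{1,3,7\}$, $A_6=\{2,3,5\}$, $A_7=\{2,4,6\}$, $A_8=\{4,5,6,7\}$, $B_{1,2}=\{8\}$, $B_{3,4}=\{1\}$. Let $\mathcal{F} = \{[8]\} \cup \{[8]\setminus\{i\} : i \in [8]\} \cup \{[8]\setminus\{1,2\},\ [8]\setminus\{3,4\}\}$, and define the bijection $\mathcal{A}\to\mathcal{F}$ by $F_{A_0}=[8]$, $F_{A_i}=[8]\setminus\{i\}$ for $i\in[8]$, $F_{B_{1,2}}=[8]\setminus\{1,2\}$, $F_{B_{3,4}}=[8]\setminus\{3,4\}$. Then $\mathcal{F}$ is a filter and $\mathcal{A}$ satisfies Condition 1 with this filter and bijection, while every element $x \in [8]$ belongs to exactly $5$ of the $11$ sets of $\mathcal{A}$. Consequently, it is false that every family $\mathcal{A}\subseteq 2^{[n]}$ satisfying Condition 1 has an element of $[n]$ lying in at least half of the sets of $\mathcal{A}$.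
   Context: $[n]=\{1,\dots,n\}$. A family $\mathcal{F} \subseteq 2^{[n]}$ is a filter if $F \in \mathcal{F}$ and $F \subseteq G \subseteq [n]$ imply $G \in \mathcal{F}$. For $A \subseteq B \subseteq [n]$, $[A,B] = \{C : A \subseteq C \subseteq B\}$. A family $\mathcal{A} \subseteq 2^{[n]}$ satisfies Condition 1 if there exist a filter $\mathcal{F} \subseteq 2^{[n]}$ and a bijection $A \mapsto F_A$ from $\mathcal{A}$ onto $\mathcal{F}$ such that (i) $A \subseteq F_A$ for all $A \in \mathcal{A}$, and (ii) for distinct $A, B \in \mathcal{A}$, $[A,F_A] \cap [B,F_B] = \emptyset$ (equivalently, at least one of $A \setminus F_B$, $B \setminus F_A$ is nonempty). *)

theory Defs
  imports Main
begin

definition is_filter :: "nat \<Rightarrow> nat set set \<Rightarrow> bool" where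
  "is_filter n F \<longleftrightarrow> F \<subseteq> Pow {1..n} \<and>
     (\<forall>X\<in>F. \<forall>Y. X \<subseteq> Y \<and> Y \<subseteq> {1..n} \<longrightarrow> Y \<in> F)"

definition interval :: "nat set \<Rightarrow> nat set \<Rightarrow> nat set set" where
  "interval A B = {C. A \<subseteq> C \<and> C \<subseteq> B}"

definition cond1_with :: "nat \<Rightarrow> nat set set \<Rightarrow> nat set set \<Rightarrow> (nat set \<Rightarrow> nat set) \<Rightarrow> bool" where
  "cond1_with n \<A> F f \<longleftrightarrow> is_filter n F \<and> bij_betw f \<A> F \<and>
     (\<forall>A\<in>\<A>. A \<subseteq> f A) \<and>
     (\<forall>A\<in>\<A>. \<forall>B\<in>\<A>. A \<noteq> B \<longrightarrow> interval A (f A) \<inter> interval B (f B) = {})"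

definition cond1 :: "nat \<Rightarrow> nat set set \<Rightarrow> bool" where
  "cond1 n \<A> \<longleftrightarrow> (\<exists>F f. cond1_with n \<A> F f)"

definition exA :: "nat set set" where
  "exA = {{1..8}, {2,4,6,7,8}, {1,3,5,8}, {1,4,7,8}, {2,3,5,6}, {1,3,7}, {2,3,5},
          {2,4,6}, {4,5,6,7}, {8}, {1}}"

definition exF :: "nat set set" where
  "exF = {{1..8}} \<union> {{1..8} - {i} | i. i \<in> {1..8}} \<union> {{1..8} - {1,2}, {1..8} - {3,4}}"

definition exMap :: "nat set \<Rightarrow> nat set" where
  "exMap A =
    (if A = {1..8} then {1..8}
     else if A = {2,4,6,7,8} then {1..8} - {1}
     else if A = {1,3,5,8} then {1..8} - {2}
     else if A = {1,4,7,8} then {1..8} - {3}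
     else if A = {2,3,5,6} then {1..8} - {4}
     else if A = {1,3,7} then {1..8} - {5}
     else if A = {2,3,5} then {1..8} - {6}
     else if A = {2,4,6} then {1..8} - {7}
     else if A = {4,5,6,7} then {1..8} - {8}
     else if A = {8} then {1..8} - {1,2}
     else if A = {1} then {1..8} - {3,4}
     else {})"

end

theory Submission
  imports Defs
begin

text \<open>
  All eleven witnesses are complements of small sets: \<open>F\<^sub>A = [8] - D\<^sub>A\<close> with
  deficit \<open>D\<^sub>A \<in> {\<emptyset>, {1}, \<dots>, {8}, {1,2}, {3,4}}\<close>. This deficit family is closed under
  subsets, so the witnesses form a filter, and two intervals \<open>[A, [8] - D\<^sub>A]\<close> and
  \<open>[B, [8] - D\<^sub>B]\<close> are disjoint exactly when \<open>A\<close> meets \<open>D\<^sub>B\<close> or \<open>B\<close> meets \<open>D\<^sub>A\<close>.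
\<close>

lemma interval_disjoint_iff:
  "interval A B \<inter> interval C D = {} \<longleftrightarrow> \<not> A \<union> C \<subseteq> B \<inter> D"
  unfolding interval_def by blast

lemma is_filter_complements:
  assumes "\<DD> \<subseteq> Pow {1..n}" and "\<And>D. D \<in> \<DD> \<Longrightarrow> Pow D \<subseteq> \<DD>"
  shows "is_filter n ((\<lambda>D. {1..n} - D) ` \<DD>)"
  unfolding is_filter_def
proof (intro conjI ballI allI impI)
  show "(\<lambda>D. {1..n} - D) ` \<DD> \<subseteq> Pow {1..n}" by blast
next
  fix X Y assume "X \<in> (\<lambda>D. {1..n} - D) ` \<DD>" "X \<subseteq> Y \<and> Y \<subseteq> {1..n}"
  then obtain D where "D \<in> \<DD>" "{1..n} - D \<subseteq> Y" "Y \<subseteq> {1..n}" by blast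
  then have "{1..n} - Y \<in> \<DD>" and "Y = {1..n} - ({1..n} - Y)"
    using assms(2) by blast+
  then show "Y \<in> (\<lambda>D. {1..n} - D) ` \<DD>" by blast
qed

lemma cond1_withI:
  assumes "is_filter n \<F>" and "bij_betw f \<A> \<F>" and "\<And>A. A \<in> \<A> \<Longrightarrow> A \<subseteq> f A"
    and "\<And>A B. A \<in> \<A> \<Longrightarrow> B \<in> \<A> \<Longrightarrow> A \<noteq> B \<Longrightarrow> \<not> A \<union> B \<subseteq> f A \<inter> f B"
  shows "cond1_with n \<A> \<F> f"
  unfolding cond1_with_def interval_disjoint_iff using assms by blast

lemma bij_betw_complements:
  fixes as ds :: "'a set list" and f :: "'a set \<Rightarrow> 'a set"
  assumes "length ds = length as" and "distinct as" "distinct ds"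
    and "\<forall>D\<in>set ds. D \<subseteq> U"
    and "\<forall>i<length as. f (as ! i) = U - ds ! i"
  shows "bij_betw f (set as) ((\<lambda>D. U - D) ` set ds)"
proof -
  have "map f as = map (\<lambda>D. U - D) ds"
    using assms(1,5) by (simp add: list_eq_iff_nth_eq)
  then have image: "f ` set as = (\<lambda>D. U - D) ` set ds"
    by (metis set_map)
  have "inj_on (\<lambda>D. U - D) (set ds)"
    using assms(4) by (intro inj_onI) blast
  then have "card (f ` set as) = card (set as)"
    using image assms(1-3) by (simp add: card_image distinct_card)
  then show ?thesis
    using image by (simp add: bij_betw_def eq_card_imp_inj_on)
qed

lemma cond1_with_complements:
  fixes as ds :: "nat set list" and f :: "nat set \<Rightarrow> nat set"
  assumes filter: "is_filter n ((\<lambda>D. {1..n} - D) ` set ds)"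
    and "length ds = length as" and "distinct as" "distinct ds"
    and "\<forall>D\<in>set ds. D \<subseteq> {1..n}"
    and witnesses: "\<forall>i<length as. as ! i \<subseteq> {1..n} - ds ! i \<and> f (as ! i) = {1..n} - ds ! i"
    and separated: "\<forall>i<length as. \<forall>j<length as. i \<noteq> j \<longrightarrow>
                      as ! i \<inter> ds ! j \<noteq> {} \<or> as ! j \<inter> ds ! i \<noteq> {}"
  shows "cond1_with n (set as) ((\<lambda>D. {1..n} - D) ` set ds) f"
proof (rule cond1_withI[OF filter bij_betw_complements])
  show "A \<subseteq> f A" if "A \<in> set as" for A
    using witnesses that by (metis in_set_conv_nth)
next
  fix A B assume "A \<in> set as" "B \<in> set as" "A \<noteq> B"
  then obtain i j where "i < length as" "A = as ! i" "j < length as" "B = as ! j" "i \<noteq> j"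
    by (metis in_set_conv_nth)
  moreover from this have "f A = {1..n} - ds ! i" "f B = {1..n} - ds ! j"
    and "A \<inter> ds ! j \<noteq> {} \<or> B \<inter> ds ! i \<noteq> {}"
    using witnesses separated by simp_all
  ultimately show "\<not> A \<union> B \<subseteq> f A \<inter> f B"
    by blast
qed (use assms in simp_all)

definition members :: "nat set list" where
  "members = [{1..8}, {2,4,6,7,8}, {1,3,5,8}, {1,4,7,8}, {2,3,5,6}, {1,3,7}, {2,3,5},
              {2,4,6}, {4,5,6,7}, {8}, {1}]"

definition deficits :: "nat set list" where
  "deficits = [{}, {1}, {2}, {3}, {4}, {5}, {6}, {7}, {8}, {1,2}, {3,4}]"

lemma distinct_members: "distinct members"
  unfolding members_def by code_simp

lemma distinct_deficits: "distinct deficits"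
  unfolding deficits_def by code_simp

lemma length_deficits: "length deficits = length members"
  unfolding members_def deficits_def by simp

lemma deficits_subset: "\<forall>D\<in>set deficits. D \<subseteq> {1..8}"
  unfolding deficits_def by code_simp

lemma deficits_downward_closed: "\<forall>D\<in>set deficits. Pow D \<subseteq> set deficits"
  unfolding deficits_def by code_simp

lemma exMap_members:
  "\<forall>i<length members. members ! i \<subseteq> {1..8} - deficits ! i \<and>
     exMap (members ! i) = {1..8} - deficits ! i"
  unfolding members_def deficits_def exMap_def by code_simp

lemma members_separated:
  "\<forall>i<length members. \<forall>j<length members. i \<noteq> j \<longrightarrow>
     members ! i \<inter> deficits ! j \<noteq> {} \<or> members ! j \<inter> deficits ! i \<noteq> {}"
  unfolding members_def deficits_def by code_simp

lemma length_filter_members: "\<forall>x\<in>{1..8}. length (filter (\<lambda>A. x \<in> A) members) = 5"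
  unfolding members_def by code_simp

lemma exA_eq: "exA = set members"
  unfolding exA_def members_def by simp

lemma exF_eq: "exF = (\<lambda>D. {1..8} - D) ` set deficits"
proof -
  have "{1..8::nat} = {1,2,3,4,5,6,7,8}" by auto
  then have "(\<lambda>i. {1..8::nat} - {i}) ` {1..8} = (\<lambda>D. {1..8} - D) ` {{1},{2},{3},{4},{5},{6},{7},{8}}"
    by (simp only: image_insert image_empty)
  then show ?thesis
    unfolding exF_def deficits_def Setcompr_eq_image by (simp add: insert_commute)
qed

lemma exA_subset_Pow: "exA \<subseteq> Pow {1..8}"
  unfolding exA_eq members_def by auto

lemma card_exA: "card exA = 11"
  unfolding exA_eq using distinct_members by (simp add: distinct_card members_def)

lemma card_exA_containing:
  assumes "x \<in> {1..8}" shows "card {A \<in> exA. x \<in> A} = 5"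
proof -
  have "card {A \<in> exA. x \<in> A} = length (filter (\<lambda>A. x \<in> A) members)"
    unfolding exA_eq using distinct_members by (metis distinct_card distinct_filter set_filter)
  also have "\<dots> = 5"
    using length_filter_members assms by blast
  finally show ?thesis .
qed

lemma is_filter_exF: "is_filter 8 exF"
  unfolding exF_eq using deficits_subset deficits_downward_closed
  by (intro is_filter_complements) blast+

lemma cond1_with_exA: "cond1_with 8 exA exF exMap"
  using is_filter_exF unfolding exA_eq exF_eq
  by (rule cond1_with_complements[OF _ length_deficits distinct_members distinct_deficits
        deficits_subset exMap_members members_separated])

theorem mainTheorem3:
  shows "exA \<subseteq> Pow {1..8} \<and> card exA = 11 \<and>
         is_filter 8 exF \<and> cond1_with 8 exA exF exMap \<and>
         (\<forall>x\<in>{1..8::nat}. card {A\<in>exA. x \<in> A} = 5) \<and>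
         \<not> (\<forall>(n::nat) (\<A>::nat set set). \<A> \<subseteq> Pow {1..n} \<and> cond1 n \<A> \<longrightarrow>
               (\<exists>x\<in>{1..n}. 2 * card {A\<in>\<A>. x \<in> A} \<ge> card \<A>))"
proof -
  have "cond1 8 exA"
    unfolding cond1_def using cond1_with_exA by blast
  moreover have "\<not> (\<exists>x\<in>{1..8::nat}. 2 * card {A\<in>exA. x \<in> A} \<ge> card exA)"
    using card_exA card_exA_containing by auto
  ultimately show ?thesis
    using exA_subset_Pow card_exA is_filter_exF cond1_with_exA card_exA_containing by blast
qed

end
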